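(* Let $n\ge2$ and let $A$ be the generalized Cartan matrix of affine type $A_n^{(1)}$: $I=\mathbb Z/(n+1)\mathbb Z$, $a_{\bar i,\bar i}=2$, $a_{\bar i,\overline{i+1}}=a_{\bar i,\overline{i-1}}=-1$, and all other entries $0$. Then the set of quantum roots is exactly $$\mathcal Q(\Phi_+)=\Big\{\textstyle\sum_{t=0}^{l}\alpha_{\overline{k+t}}\ \Big|\ k\in\mathbb Z/(n+1)\mathbb Z,\ 0\le l\le n-1\Big\},$$ i.e. the sums of simple roots over proper nonempty cyclic intervals of $\mathbb Z/(n+1)\mathbb Z$.
   Context: Kac–Moody root datum $(A,X,Y,(\alpha_i)_{i\in I},(\alpha_i^\vee)_{i\in I})$: free $\mathbb Z$-modules $X,Y$ of finite rank with perfect pairing, linearly independent simple roots $(\alpha_i)\subset X$ and coroots $(\alpha_i^\vee)\subset Y$, $\langle\alpha_i^\vee,\alpha_j\rangle=a_{i,j}$. Simple reflections $r_i(x)=x-\langle\alpha_i^\vee,x\rangle\alpha_i$, $r_i(y)=y-\langle y,\alpha_i\rangle\alpha_i^\vee$, $W^v=\langle r_i\rangle$, real roots $\Phi=W^v\{\alpha_i\}$, $\Phi_+=\Phi\cap\bigoplus\mathbb Z_{\ge0}\alpha_i$; coroot $\beta^\vee=w(\alpha_i^\vee)$, $s_\beta=wr_iw^{-1}$ for $\beta=w(\alpha_i)$. $\mathrm{Inv}(w)=\{\alpha\in\Phi_+\mid w\alpha\in\Phi_-\}$; $\beta\in\Phi_+$ is quantum if $\langle\beta^\vee,\gamma\rangle=1$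 for all $\gamma\in\mathrm{Inv}(s_\beta)\setminus\{\beta\}$. *)

theory Defs
  imports Main
begin

text \<open>A Kac-Moody root datum, up to isomorphism: X = Y = Z^m, realised as functions
  nat => int supported in {..<m}, with the standard perfect pairing.\<close>

definition pair :: "nat \<Rightarrow> (nat \<Rightarrow> int) \<Rightarrow> (nat \<Rightarrow> int) \<Rightarrow> int" where
  "pair m y x = (\<Sum>k<m. y k * x k)"

definition refl :: "nat \<Rightarrow> (nat \<Rightarrow> int) \<Rightarrow> (nat \<Rightarrow> int) \<Rightarrow> (nat \<Rightarrow> int) \<Rightarrow> (nat \<Rightarrow> int)" where
  "refl m a av x = (\<lambda>k. x k - pair m av x * a k)"

text \<open>A Weyl group element is given by a word [i1,...,ik] meaning r_i1 ... r_ik.\<close>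
definition actX :: "nat \<Rightarrow> (nat \<Rightarrow> nat \<Rightarrow> int) \<Rightarrow> (nat \<Rightarrow> nat \<Rightarrow> int) \<Rightarrow> nat list \<Rightarrow> (nat \<Rightarrow> int) \<Rightarrow> (nat \<Rightarrow> int)" where
  "actX m \<alpha> \<alpha>v ws x = foldr (\<lambda>i. refl m (\<alpha> i) (\<alpha>v i)) ws x"

definition actY :: "nat \<Rightarrow> (nat \<Rightarrow> nat \<Rightarrow> int) \<Rightarrow> (nat \<Rightarrow> nat \<Rightarrow> int) \<Rightarrow> nat list \<Rightarrow> (nat \<Rightarrow> int) \<Rightarrow> (nat \<Rightarrow> int)" where
  "actY m \<alpha> \<alpha>v ws y = foldr (\<lambda>i. refl m (\<alpha>v i) (\<alpha> i)) ws y"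

definition lin_indep_Z :: "nat set \<Rightarrow> (nat \<Rightarrow> nat \<Rightarrow> int) \<Rightarrow> bool" where
  "lin_indep_Z I v = (\<forall>c :: nat \<Rightarrow> int. (\<forall>k. (\<Sum>i\<in>I. c i * v i k) = 0) \<longrightarrow> (\<forall>i\<in>I. c i = 0))"

definition root_datum :: "nat set \<Rightarrow> nat \<Rightarrow> (nat \<Rightarrow> nat \<Rightarrow> int) \<Rightarrow> (nat \<Rightarrow> nat \<Rightarrow> int) \<Rightarrow> (nat \<Rightarrow> nat \<Rightarrow> int) \<Rightarrow> bool" where
  "root_datum I m A \<alpha> \<alpha>v \<longleftrightarrow> finite I
     \<and> (\<forall>i\<in>I. \<forall>k\<ge>m. \<alpha> i k = 0 \<and> \<alpha>v i k = 0)
     \<and> lin_indep_Z I \<alpha> \<and> lin_indep_Z I \<alpha>v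
     \<and> (\<forall>i\<in>I. \<forall>j\<in>I. pair m (\<alpha>v i) (\<alpha> j) = A i j)"

definition real_roots :: "nat set \<Rightarrow> nat \<Rightarrow> (nat \<Rightarrow> nat \<Rightarrow> int) \<Rightarrow> (nat \<Rightarrow> nat \<Rightarrow> int) \<Rightarrow> (nat \<Rightarrow> int) set" where
  "real_roots I m \<alpha> \<alpha>v = {actX m \<alpha> \<alpha>v w (\<alpha> i) | w i. set w \<subseteq> I \<and> i \<in> I}"

definition pos_roots :: "nat set \<Rightarrow> nat \<Rightarrow> (nat \<Rightarrow> nat \<Rightarrow> int) \<Rightarrow> (nat \<Rightarrow> nat \<Rightarrow> int) \<Rightarrow> (nat \<Rightarrow> int) set" where
  "pos_roots I m \<alpha> \<alpha>v = real_roots I m \<alpha> \<alpha>v \<inter>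
     {x. \<exists>c :: nat \<Rightarrow> int. (\<forall>i\<in>I. 0 \<le> c i) \<and> x = (\<lambda>k. \<Sum>i\<in>I. c i * \<alpha> i k)}"

definition neg_roots :: "nat set \<Rightarrow> nat \<Rightarrow> (nat \<Rightarrow> nat \<Rightarrow> int) \<Rightarrow> (nat \<Rightarrow> nat \<Rightarrow> int) \<Rightarrow> (nat \<Rightarrow> int) set" where
  "neg_roots I m \<alpha> \<alpha>v = real_roots I m \<alpha> \<alpha>v \<inter>
     {x. \<exists>c :: nat \<Rightarrow> int. (\<forall>i\<in>I. c i \<le> 0) \<and> x = (\<lambda>k. \<Sum>i\<in>I. c i * \<alpha> i k)}"

definition Inv :: "nat set \<Rightarrow> nat \<Rightarrow> (nat \<Rightarrow> nat \<Rightarrow> int) \<Rightarrow> (nat \<Rightarrow> nat \<Rightarrow> int) \<Rightarrow> nat list \<Rightarrow> (nat \<Rightarrow> int) set" where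
  "Inv I m \<alpha> \<alpha>v w = {a \<in> pos_roots I m \<alpha> \<alpha>v. actX m \<alpha> \<alpha>v w a \<in> neg_roots I m \<alpha> \<alpha>v}"

text \<open>beta = w(alpha_i), beta^vee = w(alpha_i^vee), s_beta = w r_i w^{-1} (word w @ [i] @ rev w).\<close>
definition quantum :: "nat set \<Rightarrow> nat \<Rightarrow> (nat \<Rightarrow> nat \<Rightarrow> int) \<Rightarrow> (nat \<Rightarrow> nat \<Rightarrow> int) \<Rightarrow> (nat \<Rightarrow> int) \<Rightarrow> bool" where
  "quantum I m \<alpha> \<alpha>v \<beta> \<longleftrightarrow> \<beta> \<in> pos_roots I m \<alpha> \<alpha>v \<and>
     (\<exists>w i. set w \<subseteq> I \<and> i \<in> I \<and> actX m \<alpha> \<alpha>v w (\<alpha> i) = \<beta> \<and>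
        (\<forall>\<gamma> \<in> Inv I m \<alpha> \<alpha>v (w @ [i] @ rev w) - {\<beta>}.
            pair m (actY m \<alpha> \<alpha>v w (\<alpha>v i)) \<gamma> = 1))"

text \<open>Cartan matrix of type A_n^(1), indices I = {0..n} standing for Z/(n+1)Z.\<close>
definition cartan_affA :: "nat \<Rightarrow> nat \<Rightarrow> nat \<Rightarrow> int" where
  "cartan_affA n i j = (if i = j then 2
      else if j = (i + 1) mod (n + 1) \<or> i = (j + 1) mod (n + 1) then -1 else 0)"

end

theory Submission
  imports Defs
begin

(*
  In coordinates with respect to the simple roots, r_i acts on coefficient vectors through the
  Cartan matrix, and for A_n^(1) the pairing of coroot and root coefficient vectors d, c is the
  cyclic form B(d, c) = sum_i (d_i - d_(i+1)) (c_i - c_(i+1)).  A positive real root has a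
  nonnegative coefficient vector c with B(c, c) = 2; read around the cycle from a minimum M, c - M
  is an integer walk from 0 to 0 with squared variation 2, so c is M plus the indicator of a proper
  cyclic interval.

  If M > 0, the interval root gamma is an inversion of s_beta with <beta^vee, gamma> = 2, so beta
  is not quantum.  Conversely, let beta be an interval root and gamma /= beta an inversion of
  s_beta, with b = <beta^vee, gamma>.  Negativity of s_beta gamma = gamma - b beta forces b >= 1,
  and B(gamma - beta, gamma - beta) = 4 - 2b >= 0 forces b <= 2; b = 2 would make gamma - beta
  constant, hence zero, since beta vanishes outside its interval.
*)

lemma pair_diff_right:
  "pair m y (\<lambda>k. x k - a * z k) = pair m y x - a * pair m y z"
  by (simp add: pair_def sum_subtractf sum_distrib_left algebra_simps)

lemma pair_diff_left:
  "pair m (\<lambda>k. y k - a * z k) x = pair m y x - a * pair m z x"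
  by (simp add: pair_def sum_subtractf sum_distrib_left algebra_simps)

lemma pair_commute: "pair m y x = pair m x y"
  unfolding pair_def by (simp add: mult.commute)

lemma refl_involutive:
  assumes "pair m av a = 2"
  shows "refl m a av (refl m a av x) = x"
proof -
  have "pair m av (refl m a av x) = - pair m av x"
    using assms by (simp add: refl_def pair_diff_right)
  then show ?thesis by (simp add: refl_def)
qed

lemma pair_refl_refl:
  assumes "pair m av a = 2"
  shows "pair m (refl m av a y) (refl m a av x) = pair m y x"
proof -
  have "pair m (\<lambda>k. y k - pair m y a * av k) (\<lambda>k. x k - pair m av x * a k)
      = pair m y x - pair m av x * pair m y a
        - pair m y a * (pair m av x - pair m av x * pair m av a)"
    by (simp only: pair_diff_left pair_diff_right)
  then show ?thesis
    using assms by (simp add: refl_def pair_commute[of m a])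
qed

lemma refl_diff:
  "refl m a av (\<lambda>k. x k - c * z k) = (\<lambda>k. refl m a av x k - c * refl m a av z k)"
  by (simp add: refl_def pair_diff_right fun_eq_iff algebra_simps)

section \<open>Coordinates with respect to the simple roots\<close>

definition lincomb :: "nat set \<Rightarrow> (nat \<Rightarrow> nat \<Rightarrow> int) \<Rightarrow> (nat \<Rightarrow> int) \<Rightarrow> nat \<Rightarrow> int" where
  "lincomb I v c = (\<lambda>k. \<Sum>i\<in>I. c i * v i k)"

definition unit_vec :: "nat \<Rightarrow> nat \<Rightarrow> int" where
  "unit_vec i = (\<lambda>j. of_bool (j = i))"

text \<open>\<open>r\<^sub>i(\<Sum>\<^sub>j c\<^sub>j \<alpha>\<^sub>j) = \<Sum>\<^sub>j c\<^sub>j \<alpha>\<^sub>j - (\<Sum>\<^sub>k B\<^sub>i\<^sub>k c\<^sub>k) \<alpha>\<^sub>i\<close> with \<open>B = A\<close>; on coroots the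
  same formula holds with the transpose of \<open>A\<close>.\<close>
definition coeff_refl :: "nat set \<Rightarrow> (nat \<Rightarrow> nat \<Rightarrow> int) \<Rightarrow> nat \<Rightarrow> (nat \<Rightarrow> int) \<Rightarrow> nat \<Rightarrow> int" where
  "coeff_refl I B i c = (\<lambda>j. c j - (if j = i then \<Sum>k\<in>I. B i k * c k else 0))"

definition coeff_act :: "nat set \<Rightarrow> (nat \<Rightarrow> nat \<Rightarrow> int) \<Rightarrow> nat list \<Rightarrow> (nat \<Rightarrow> int) \<Rightarrow> nat \<Rightarrow> int" where
  "coeff_act I B w c = foldr (coeff_refl I B) w c"

definition cartan_form :: "nat set \<Rightarrow> (nat \<Rightarrow> nat \<Rightarrow> int) \<Rightarrow> (nat \<Rightarrow> int) \<Rightarrow> (nat \<Rightarrow> int) \<Rightarrow> int" where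
  "cartan_form I B d c = (\<Sum>i\<in>I. \<Sum>j\<in>I. d i * B i j * c j)"

lemma lincomb_unit_vec: "finite I \<Longrightarrow> i \<in> I \<Longrightarrow> lincomb I v (unit_vec i) = v i"
  by (simp add: lincomb_def unit_vec_def fun_eq_iff if_distrib[of "\<lambda>a. a * _"] cong: if_cong)

lemma lincomb_diff: "lincomb I v (\<lambda>j. g j - b * c j) = (\<lambda>k. lincomb I v g k - b * lincomb I v c k)"
  by (simp add: lincomb_def fun_eq_iff algebra_simps sum_subtractf sum_distrib_left)

lemma lincomb_cong: "(\<And>i. i \<in> I \<Longrightarrow> c i = d i) \<Longrightarrow> lincomb I v c = lincomb I v d"
  unfolding lincomb_def by (auto intro!: sum.cong)

lemma pair_lincomb_right: "pair m y (lincomb I v c) = (\<Sum>j\<in>I. c j * pair m y (v j))"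
  unfolding pair_def lincomb_def
  by (simp add: sum_distrib_left sum_distrib_right mult_ac sum.swap[of _ I])

lemma pair_lincomb_left: "pair m (lincomb I v d) x = (\<Sum>i\<in>I. d i * pair m (v i) x)"
  using pair_lincomb_right[of m x I v d] by (simp add: pair_commute[of m x])

lemma lincomb_sum_of_bool:
  assumes "finite I" "\<And>t. t \<in> T \<Longrightarrow> f t \<in> I"
  shows "lincomb I v (\<lambda>j. \<Sum>t\<in>T. of_bool (j = f t)) = (\<lambda>k. \<Sum>t\<in>T. v (f t) k)"
proof
  fix k
  have "lincomb I v (\<lambda>j. \<Sum>t\<in>T. of_bool (j = f t)) k = (\<Sum>t\<in>T. \<Sum>i\<in>I. of_bool (i = f t) * v i k)"
    by (simp add: lincomb_def sum_distrib_right sum.swap[of _ I])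
  also have "\<dots> = (\<Sum>t\<in>T. v (f t) k)"
    using assms
    by (intro sum.cong) (simp_all add: of_bool_def if_distrib[of "\<lambda>a. a * _"] sum.delta cong: if_cong)
  finally show "lincomb I v (\<lambda>j. \<Sum>t\<in>T. of_bool (j = f t)) k = (\<Sum>t\<in>T. v (f t) k)" .
qed

locale cartan_root_datum =
  fixes I :: "nat set" and m :: nat and A \<alpha> \<alpha>v :: "nat \<Rightarrow> nat \<Rightarrow> int"
  assumes root_datum: "root_datum I m A \<alpha> \<alpha>v"
    and cartan_diag: "\<And>i. i \<in> I \<Longrightarrow> A i i = 2"
begin

lemma finite_I: "finite I"
  using root_datum by (simp add: root_datum_def)

lemma pair_simple: "i \<in> I \<Longrightarrow> j \<in> I \<Longrightarrow> pair m (\<alpha>v i) (\<alpha> j) = A i j"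
  using root_datum by (simp add: root_datum_def)

lemma actX_rev_actX: "set w \<subseteq> I \<Longrightarrow> actX m \<alpha> \<alpha>v (rev w) (actX m \<alpha> \<alpha>v w x) = x"
  by (induction w arbitrary: x)
     (simp_all add: actX_def refl_involutive pair_simple cartan_diag)

lemma actX_actX_rev: "set w \<subseteq> I \<Longrightarrow> actX m \<alpha> \<alpha>v w (actX m \<alpha> \<alpha>v (rev w) x) = x"
  using actX_rev_actX[of "rev w"] by simp

lemma actX_diff:
  "actX m \<alpha> \<alpha>v w (\<lambda>k. x k - c * z k) = (\<lambda>k. actX m \<alpha> \<alpha>v w x k - c * actX m \<alpha> \<alpha>v w z k)"
  by (induction w) (simp_all add: actX_def refl_diff)

lemma pair_actY_actX:
  "set w \<subseteq> I \<Longrightarrow> pair m (actY m \<alpha> \<alpha>v w y) (actX m \<alpha> \<alpha>v w x) = pair m y x"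
  by (induction w) (simp_all add: actX_def actY_def pair_refl_refl pair_simple cartan_diag)

lemma actX_conj_reflection:
  assumes "set w \<subseteq> I" "i \<in> I"
  shows "actX m \<alpha> \<alpha>v (w @ [i] @ rev w) x =
    (\<lambda>k. x k - pair m (actY m \<alpha> \<alpha>v w (\<alpha>v i)) x * actX m \<alpha> \<alpha>v w (\<alpha> i) k)"
proof -
  define x' where "x' = actX m \<alpha> \<alpha>v (rev w) x"
  have x: "actX m \<alpha> \<alpha>v w x' = x"
    using actX_actX_rev assms(1) x'_def by simp
  have "actX m \<alpha> \<alpha>v (w @ [i] @ rev w) x = actX m \<alpha> \<alpha>v w (refl m (\<alpha> i) (\<alpha>v i) x')"
    by (simp add: actX_def x'_def)
  also have "\<dots> = (\<lambda>k. x k - pair m (\<alpha>v i) x' * actX m \<alpha> \<alpha>v w (\<alpha> i) k)"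
    by (simp add: refl_def actX_diff x)
  also have "pair m (\<alpha>v i) x' = pair m (actY m \<alpha> \<alpha>v w (\<alpha>v i)) x"
    using pair_actY_actX[OF assms(1)] x by metis
  finally show ?thesis .
qed

lemma lincomb_root_inj:
  assumes "lincomb I \<alpha> c = lincomb I \<alpha> d" "i \<in> I"
  shows "c i = d i"
proof -
  have "\<forall>k. (\<Sum>i\<in>I. (c i - d i) * \<alpha> i k) = 0"
    using assms(1) by (simp add: lincomb_def fun_eq_iff algebra_simps sum_subtractf)
  then show ?thesis
    using root_datum assms(2) unfolding root_datum_def lin_indep_Z_def by fastforce
qed

lemma refl_lincomb_root:
  "i \<in> I \<Longrightarrow> refl m (\<alpha> i) (\<alpha>v i) (lincomb I \<alpha> c) = lincomb I \<alpha> (coeff_refl I A i c)"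
proof -
  assume i: "i \<in> I"
  have "pair m (\<alpha>v i) (lincomb I \<alpha> c) = (\<Sum>k\<in>I. A i k * c k)"
    using i by (simp add: pair_lincomb_right pair_simple mult.commute)
  then show ?thesis
    using i finite_I
    by (simp add: refl_def coeff_refl_def lincomb_def fun_eq_iff left_diff_distrib sum_subtractf
        if_distrib[of "\<lambda>a. a * _"] sum.delta cong: if_cong)
qed

lemma refl_lincomb_coroot:
  "i \<in> I \<Longrightarrow> refl m (\<alpha>v i) (\<alpha> i) (lincomb I \<alpha>v c) = lincomb I \<alpha>v (coeff_refl I (\<lambda>i j. A j i) i c)"
proof -
  assume i: "i \<in> I"
  have "pair m (\<alpha> i) (lincomb I \<alpha>v c) = (\<Sum>k\<in>I. A k i * c k)"
    using i by (simp add: pair_lincomb_right pair_commute[of m "\<alpha> i"] pair_simple mult.commute)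
  then show ?thesis
    using i finite_I
    by (simp add: refl_def coeff_refl_def lincomb_def fun_eq_iff left_diff_distrib sum_subtractf
        if_distrib[of "\<lambda>a. a * _"] sum.delta cong: if_cong)
qed

lemma actX_lincomb:
  "set w \<subseteq> I \<Longrightarrow> actX m \<alpha> \<alpha>v w (lincomb I \<alpha> c) = lincomb I \<alpha> (coeff_act I A w c)"
  by (induction w) (simp_all add: actX_def coeff_act_def refl_lincomb_root)

lemma actY_lincomb:
  "set w \<subseteq> I \<Longrightarrow> actY m \<alpha> \<alpha>v w (lincomb I \<alpha>v c) = lincomb I \<alpha>v (coeff_act I (\<lambda>i j. A j i) w c)"
  by (induction w) (simp_all add: actY_def coeff_act_def refl_lincomb_coroot)

lemma pair_lincomb: "pair m (lincomb I \<alpha>v d) (lincomb I \<alpha> c) = cartan_form I A d c"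
proof -
  have "pair m (lincomb I \<alpha>v d) (lincomb I \<alpha> c) = (\<Sum>i\<in>I. d i * (\<Sum>j\<in>I. c j * A i j))"
    unfolding pair_lincomb_left by (simp add: pair_lincomb_right pair_simple cong: sum.cong)
  then show ?thesis
    by (simp add: cartan_form_def sum_distrib_left mult_ac)
qed

lemma actX_simple_root:
  "set w \<subseteq> I \<Longrightarrow> i \<in> I \<Longrightarrow> actX m \<alpha> \<alpha>v w (\<alpha> i) = lincomb I \<alpha> (coeff_act I A w (unit_vec i))"
  using actX_lincomb lincomb_unit_vec finite_I by metis

lemma actY_simple_coroot:
  "set w \<subseteq> I \<Longrightarrow> i \<in> I \<Longrightarrow>
    actY m \<alpha> \<alpha>v w (\<alpha>v i) = lincomb I \<alpha>v (coeff_act I (\<lambda>i j. A j i) w (unit_vec i))"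
  using actY_lincomb lincomb_unit_vec finite_I by metis

lemma cartan_form_coeff_act:
  assumes "set w \<subseteq> I" "i \<in> I"
  shows "cartan_form I A (coeff_act I (\<lambda>i j. A j i) w (unit_vec i))
    (coeff_act I A w (unit_vec i)) = 2"
proof -
  have "cartan_form I A (coeff_act I (\<lambda>i j. A j i) w (unit_vec i)) (coeff_act I A w (unit_vec i)) =
      pair m (actY m \<alpha> \<alpha>v w (\<alpha>v i)) (actX m \<alpha> \<alpha>v w (\<alpha> i))"
    using assms by (simp add: actX_simple_root actY_simple_coroot pair_lincomb)
  also have "\<dots> = 2"
    using assms by (simp add: pair_actY_actX pair_simple cartan_diag)
  finally show ?thesis .
qed

lemma pair_coroot_lincomb:
  assumes "set w \<subseteq> I" "i \<in> I"
  shows "pair m (actY m \<alpha> \<alpha>v w (\<alpha>v i)) (lincomb I \<alpha> g) =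
    cartan_form I A (coeff_act I (\<lambda>i j. A j i) w (unit_vec i)) g"
  using assms by (simp add: actY_simple_coroot pair_lincomb)

lemma actX_conj_reflection_lincomb:
  assumes "set w \<subseteq> I" "i \<in> I"
  shows "actX m \<alpha> \<alpha>v (w @ [i] @ rev w) (lincomb I \<alpha> g) = lincomb I \<alpha> (\<lambda>j.
    g j - cartan_form I A (coeff_act I (\<lambda>i j. A j i) w (unit_vec i)) g * coeff_act I A w (unit_vec i) j)"
  unfolding actX_conj_reflection[OF assms]
  using assms by (simp add: pair_coroot_lincomb actX_simple_root lincomb_diff)

lemma simple_root_real_root:
  "set w \<subseteq> I \<Longrightarrow> i \<in> I \<Longrightarrow> actX m \<alpha> \<alpha>v w (\<alpha> i) \<in> real_roots I m \<alpha> \<alpha>v"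
  unfolding real_roots_def by blast

lemma actX_real_root:
  "x \<in> real_roots I m \<alpha> \<alpha>v \<Longrightarrow> set w \<subseteq> I \<Longrightarrow> actX m \<alpha> \<alpha>v w x \<in> real_roots I m \<alpha> \<alpha>v"
  unfolding real_roots_def
  by (fastforce simp: actX_def foldr_append[symmetric] simp del: foldr_append)

lemma pos_root_coeff_nonneg:
  "lincomb I \<alpha> c \<in> pos_roots I m \<alpha> \<alpha>v \<Longrightarrow> i \<in> I \<Longrightarrow> 0 \<le> c i"
  unfolding pos_roots_def using lincomb_root_inj by (fastforce simp: lincomb_def)

lemma neg_root_coeff_nonpos:
  "lincomb I \<alpha> c \<in> neg_roots I m \<alpha> \<alpha>v \<Longrightarrow> i \<in> I \<Longrightarrow> c i \<le> 0"
  unfolding neg_roots_def using lincomb_root_inj by (fastforce simp: lincomb_def)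

lemma pos_rootI:
  "lincomb I \<alpha> c \<in> real_roots I m \<alpha> \<alpha>v \<Longrightarrow> (\<And>i. i \<in> I \<Longrightarrow> 0 \<le> c i) \<Longrightarrow>
    lincomb I \<alpha> c \<in> pos_roots I m \<alpha> \<alpha>v"
  unfolding pos_roots_def lincomb_def by blast

lemma neg_rootI:
  "lincomb I \<alpha> c \<in> real_roots I m \<alpha> \<alpha>v \<Longrightarrow> (\<And>i. i \<in> I \<Longrightarrow> c i \<le> 0) \<Longrightarrow>
    lincomb I \<alpha> c \<in> neg_roots I m \<alpha> \<alpha>v"
  unfolding neg_roots_def lincomb_def by blast

end

section \<open>The quadratic form of type \<open>A\<^sub>n\<^sup>(\<^sup>1\<^sup>)\<close>\<close>

lemma add_mod_eq_add_mod_iff: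
  fixes N p t u :: nat
  assumes "t < N" "u < N"
  shows "(p + t) mod N = (p + u) mod N \<longleftrightarrow> t = u"
proof -
  have "t = u" if "t \<le> u" "u < N" "(p + t) mod N = (p + u) mod N" for t u
  proof -
    have "N dvd u - t"
      using that mod_eq_dvd_iff_nat[of "p + t" "p + u" N] by simp
    then have "\<not> (0 < u - t \<and> u - t < N)"
      using nat_dvd_not_less by blast
    then show ?thesis
      using that by linarith
  qed
  then show ?thesis
    using assms by (metis nat_le_linear)
qed

lemma inj_on_rotation: "inj_on (\<lambda>i. (i + p) mod (n + 1)) {0..n::nat}"
  by (rule inj_onI) (auto simp: add.commute[of _ p] add_mod_eq_add_mod_iff)

lemma rotation_image: "(\<lambda>i. (i + p) mod (n + 1)) ` {0..n::nat} = {0..n}"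
  using inj_on_rotation by (intro endo_inj_surj) (auto simp: less_Suc_eq_le[symmetric])

lemma sum_rotate:
  fixes n p :: nat and F :: "nat \<Rightarrow> 'a::comm_monoid_add"
  shows "(\<Sum>i\<in>{0..n}. F ((i + p) mod (n + 1))) = (\<Sum>i\<in>{0..n}. F i)"
  using sum.reindex[OF inj_on_rotation, of F p n] rotation_image[of p n] by simp

lemma mod_succ_eq_iff:
  fixes i j n :: nat
  assumes "i \<le> n" "j \<le> n"
  shows "i = (j + 1) mod (n + 1) \<longleftrightarrow> j = (i + n) mod (n + 1)"
proof
  assume i: "i = (j + 1) mod (n + 1)"
  have "(i + n) mod (n + 1) = (j + (n + 1)) mod (n + 1)"
    unfolding i by (simp only: mod_add_left_eq) (simp add: ac_simps)
  also have "\<dots> = j"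
    using assms(2) by (simp only: mod_add_self2) simp
  finally show "j = (i + n) mod (n + 1)" ..
next
  assume j: "j = (i + n) mod (n + 1)"
  have "(j + 1) mod (n + 1) = (i + (n + 1)) mod (n + 1)"
    unfolding j by (simp only: mod_add_left_eq) (simp add: ac_simps)
  also have "\<dots> = i"
    using assms(1) by (simp only: mod_add_self2) simp
  finally show "i = (j + 1) mod (n + 1)" ..
qed

lemma cartan_affA_row:
  fixes c :: "nat \<Rightarrow> int"
  assumes "2 \<le> n" "i \<le> n"
  shows "(\<Sum>j\<in>{0..n}. cartan_affA n i j * c j) =
    2 * c i - c ((i + 1) mod (n + 1)) - c ((i + n) mod (n + 1))"
proof -
  let ?s = "(i + 1) mod (n + 1)" and ?p = "(i + n) mod (n + 1)"
  have i: "i = (i + 0) mod (n + 1)"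
    using assms by simp
  have distinct: "?s \<noteq> i" "?p \<noteq> i" "?s \<noteq> ?p"
    using assms add_mod_eq_add_mod_iff[of 1 "n + 1" 0 i] add_mod_eq_add_mod_iff[of n "n + 1" 0 i]
      add_mod_eq_add_mod_iff[of 1 "n + 1" n i]
    by (simp_all flip: i)
  have entry: "cartan_affA n i j = 2 * of_bool (j = i) - of_bool (j = ?s) - of_bool (j = ?p)"
    if "j \<le> n" for j
    using distinct that assms(2) mod_succ_eq_iff[of i n j] by (auto simp: cartan_affA_def)
  have "(\<Sum>j\<in>{0..n}. cartan_affA n i j * c j) =
      (\<Sum>j\<in>{0..n}. 2 * (of_bool (j = i) * c j) - of_bool (j = ?s) * c j - of_bool (j = ?p) * c j)"
    by (rule sum.cong) (auto simp: entry algebra_simps)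
  then show ?thesis
    using assms(2)
    by (simp add: sum_subtractf sum_distrib_left[symmetric] of_bool_def if_distrib[of "\<lambda>a. a * _"]
        sum.delta cong: if_cong)
qed

definition cyclic_form :: "nat \<Rightarrow> (nat \<Rightarrow> int) \<Rightarrow> (nat \<Rightarrow> int) \<Rightarrow> int" where
  "cyclic_form n d c =
    (\<Sum>i\<in>{0..n}. (d i - d ((i + 1) mod (n + 1))) * (c i - c ((i + 1) mod (n + 1))))"

lemma cartan_form_affA:
  assumes "2 \<le> n"
  shows "cartan_form {0..n} (cartan_affA n) d c = cyclic_form n d c"
proof -
  let ?s = "\<lambda>i. (i + 1) mod (n + 1)" and ?p = "\<lambda>i. (i + n) mod (n + 1)"
  have "cartan_form {0..n} (cartan_affA n) d c =
      (\<Sum>i\<in>{0..n}. d i * (\<Sum>j\<in>{0..n}. cartan_affA n i j * c j))"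
    by (simp add: cartan_form_def sum_distrib_left mult.assoc)
  also have "\<dots> = (\<Sum>i\<in>{0..n}. 2 * (d i * c i) - d i * c (?s i) - d i * c (?p i))"
    by (rule sum.cong) (simp_all add: cartan_affA_row[OF assms] right_diff_distrib)
  also have "\<dots> = 2 * (\<Sum>i\<in>{0..n}. d i * c i) - (\<Sum>i\<in>{0..n}. d i * c (?s i))
      - (\<Sum>i\<in>{0..n}. d i * c (?p i))"
    by (simp add: sum_subtractf sum_distrib_left)
  also have "(\<Sum>i\<in>{0..n}. d i * c (?p i)) = (\<Sum>i\<in>{0..n}. d (?s i) * c i)"
  proof -
    have "(\<Sum>i\<in>{0..n}. d (?s i) * c i) = (\<Sum>i\<in>{0..n}. d (?s (?p i)) * c (?p i))"
      using sum_rotate[of "\<lambda>i. d (?s i) * c i" n n] by simp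
    also have "\<dots> = (\<Sum>i\<in>{0..n}. d i * c (?p i))"
    proof (rule sum.cong)
      fix i assume "i \<in> {0..n}"
      then have "?s (?p i) = i"
        using mod_succ_eq_iff[of i n "?p i"] by simp
      then show "d (?s (?p i)) * c (?p i) = d i * c (?p i)"
        by simp
    qed simp
    finally show ?thesis ..
  qed
  also have "cyclic_form n d c = 2 * (\<Sum>i\<in>{0..n}. d i * c i) - (\<Sum>i\<in>{0..n}. d i * c (?s i))
      - (\<Sum>i\<in>{0..n}. d (?s i) * c i)"
    using sum_rotate[of "\<lambda>i. d i * c i" 1 n]
    by (simp add: cyclic_form_def algebra_simps sum_subtractf sum.distrib)
  ultimately show ?thesis
    by simp
qed

lemma cyclic_form_nonneg: "0 \<le> cyclic_form n c c"
  by (simp add: cyclic_form_def sum_nonneg)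

lemma cyclic_form_cong:
  "(\<And>j. j \<le> n \<Longrightarrow> d j = d' j) \<Longrightarrow> (\<And>j. j \<le> n \<Longrightarrow> c j = c' j) \<Longrightarrow>
    cyclic_form n d c = cyclic_form n d' c'"
  unfolding cyclic_form_def by (intro sum.cong) simp_all

lemma cyclic_form_add_const: "cyclic_form n d (\<lambda>j. c j + a) = cyclic_form n d c"
  by (simp add: cyclic_form_def)

lemma cyclic_form_diff_diff:
  "cyclic_form n (\<lambda>j. g j - c j) (\<lambda>j. g j - c j) =
    cyclic_form n g g - 2 * cyclic_form n c g + cyclic_form n c c"
proof -
  let ?s = "\<lambda>i. (i + 1) mod (n + 1)"
  have "cyclic_form n (\<lambda>j. g j - c j) (\<lambda>j. g j - c j) = (\<Sum>i\<in>{0..n}.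
      (g i - g (?s i)) * (g i - g (?s i)) - 2 * ((c i - c (?s i)) * (g i - g (?s i)))
      + (c i - c (?s i)) * (c i - c (?s i)))"
    unfolding cyclic_form_def by (rule sum.cong) (simp_all add: algebra_simps)
  then show ?thesis
    by (simp add: cyclic_form_def sum.distrib sum_subtractf sum_distrib_left)
qed

lemma cyclic_form_eq_0_imp_const:
  assumes "cyclic_form n c c = 0" "j \<le> n"
  shows "c j = c 0"
proof -
  let ?d = "\<lambda>i. c i - c ((i + 1) mod (n + 1))"
  have "c (Suc i) = c i" if "i < n" for i
  proof -
    have "?d i * ?d i = 0"
      by (rule sum_nonneg_0[of "{0..n}"]) (use assms(1) that in \<open>simp_all add: cyclic_form_def\<close>)
    then show ?thesis
      using that by simp
  qed
  then show ?thesis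
    using assms(2) by (induction j) auto
qed

lemma transpose_cartan_affA: "(\<lambda>i j. cartan_affA n j i) = cartan_affA n"
  by (auto simp: cartan_affA_def fun_eq_iff)

section \<open>Integer walks of small quadratic variation\<close>

lemma all_le_Suc_conv: "(\<forall>t\<le>Suc N. P t) \<longleftrightarrow> P 0 \<and> (\<forall>t\<le>N. P (Suc t))"
  by (metis Suc_le_mono le0 not0_implies_Suc)

lemma sum_sq_diff_eq_0_imp_const:
  fixes f :: "nat \<Rightarrow> int"
  assumes "(\<Sum>t<N. (f t - f (Suc t))\<^sup>2) = 0" "t \<le> N"
  shows "f t = f 0"
proof -
  have "\<forall>t<N. f (Suc t) = f t"
    using assms(1) by (simp add: sum_nonneg_eq_0_iff)
  then show ?thesis
    using assms(2) by (induction t) auto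
qed

lemma sum_sq_diff_eq_1_imp_step:
  fixes f :: "nat \<Rightarrow> int"
  assumes "f 0 = 1" "f N = 0" "(\<Sum>t<N. (f t - f (Suc t))\<^sup>2) = 1"
  shows "\<exists>e<N. \<forall>t\<le>N. f t = of_bool (t \<le> e)"
  using assms
proof (induction N arbitrary: f)
  case 0
  then show ?case by simp
next
  case (Suc N)
  let ?g = "\<lambda>t. f (Suc t)"
  have split: "(f 0 - f 1)\<^sup>2 + (\<Sum>t<N. (?g t - ?g (Suc t))\<^sup>2) = 1"
    using Suc.prems(3) by (simp only: sum.lessThan_Suc_shift) simp
  have tail_nonneg: "(\<Sum>t<N. (?g t - ?g (Suc t))\<^sup>2) \<ge> 0"
    by (simp add: sum_nonneg)
  show ?case
  proof (cases "f 1 = 1")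
    case True
    then obtain e where "e < N" "\<forall>t\<le>N. ?g t = of_bool (t \<le> e)"
      using Suc.IH[of ?g] split Suc.prems by auto
    then have "\<forall>t\<le>Suc N. f t = of_bool (t \<le> Suc e)"
      using Suc.prems(1) by (auto simp: all_le_Suc_conv)
    then show ?thesis
      using \<open>e < N\<close> by auto
  next
    case False
    then have "(f 0 - f 1)\<^sup>2 > 0"
      using Suc.prems(1) by simp
    then have "(f 0 - f 1)\<^sup>2 \<ge> 1"
      by linarith
    then have "(\<Sum>t<N. (?g t - ?g (Suc t))\<^sup>2) = 0"
      using split tail_nonneg by linarith
    then have "?g t = ?g N" if "t \<le> N" for t
      using sum_sq_diff_eq_0_imp_const[of ?g N] that by (metis order.refl)
    then have "\<forall>t\<le>Suc N. f t = of_bool (t \<le> 0)"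
      using Suc.prems(1,2) by (auto simp: all_le_Suc_conv)
    then show ?thesis
      by auto
  qed
qed

lemma sum_sq_diff_eq_2_imp_bump:
  fixes f :: "nat \<Rightarrow> int"
  assumes "f 0 = 0" "f N = 0" "\<forall>t\<le>N. 0 \<le> f t" "(\<Sum>t<N. (f t - f (Suc t))\<^sup>2) = 2"
  shows "\<exists>s e. 1 \<le> s \<and> s \<le> e \<and> e < N \<and> (\<forall>t\<le>N. f t = of_bool (s \<le> t \<and> t \<le> e))"
  using assms
proof (induction N arbitrary: f)
  case 0
  then show ?case by simp
next
  case (Suc N)
  let ?g = "\<lambda>t. f (Suc t)"
  have split: "(f 1)\<^sup>2 + (\<Sum>t<N. (?g t - ?g (Suc t))\<^sup>2) = 2"
    using Suc.prems(1,4) by (simp only: sum.lessThan_Suc_shift) simp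
  have tail_nonneg: "(\<Sum>t<N. (?g t - ?g (Suc t))\<^sup>2) \<ge> 0"
    by (simp add: sum_nonneg)
  show ?case
  proof (cases "f 1 = 0")
    case True
    then obtain s e where "1 \<le> s" "s \<le> e" "e < N" "\<forall>t\<le>N. ?g t = of_bool (s \<le> t \<and> t \<le> e)"
      using Suc.IH[of ?g] split Suc.prems by (auto simp: all_le_Suc_conv)
    then show ?thesis
      using Suc.prems(1)
      by (intro exI[of _ "Suc s"] exI[of _ "Suc e"]) (auto simp: all_le_Suc_conv)
  next
    case False
    have "f 1 < 2"
    proof (rule ccontr)
      assume "\<not> f 1 < 2"
      then have "2\<^sup>2 \<le> (f 1)\<^sup>2"
        by (intro power_mono) auto
      then show False
        using split tail_nonneg by simp
    qed
    moreover have "f 1 \<ge> 0"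
      using Suc.prems(3) by (auto simp: all_le_Suc_conv)
    ultimately have "f 1 = 1"
      using False by simp
    then have "(\<Sum>t<N. (?g t - ?g (Suc t))\<^sup>2) = 1"
      using split by simp
    then obtain e where "e < N" "\<forall>t\<le>N. ?g t = of_bool (t \<le> e)"
      using sum_sq_diff_eq_1_imp_step[of ?g N] \<open>f 1 = 1\<close> Suc.prems(2) by auto
    then show ?thesis
      using Suc.prems(1)
      by (intro exI[of _ 1] exI[of _ "Suc e"]) (auto simp: all_le_Suc_conv)
  qed
qed

section \<open>Cyclic arcs\<close>

definition cyclic_arc :: "nat \<Rightarrow> nat \<Rightarrow> nat \<Rightarrow> nat \<Rightarrow> int" where
  "cyclic_arc n k l = (\<lambda>j. \<Sum>t\<le>l. of_bool (j = (k + t) mod (n + 1)))"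

lemma cyclic_arc_nonneg: "0 \<le> cyclic_arc n k l j"
  by (simp add: cyclic_arc_def sum_nonneg)

lemma cyclic_arc_mod: "cyclic_arc n (k mod (n + 1)) l = cyclic_arc n k l"
  by (simp add: cyclic_arc_def mod_add_left_eq)

lemma cyclic_arc_Suc:
  "cyclic_arc n k (Suc l) = (\<lambda>j. of_bool (j = k mod (n + 1)) + cyclic_arc n (k + 1) l j)"
  unfolding cyclic_arc_def by (subst sum.atMost_Suc_shift) (simp add: ac_simps)

lemma cyclic_arc_rotated:
  assumes "s + l \<le> n" "t \<le> n"
  shows "cyclic_arc n (s + p) l ((t + p) mod (n + 1)) = of_bool (s \<le> t \<and> t \<le> s + l)"
proof -
  have "cyclic_arc n (s + p) l ((t + p) mod (n + 1)) = (\<Sum>u\<le>l. of_bool (t = s + u))"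
    unfolding cyclic_arc_def
  proof (rule sum.cong)
    fix u assume "u \<in> {..l}"
    then have "((t + p) mod (n + 1) = (s + p + u) mod (n + 1)) \<longleftrightarrow> t = s + u"
      using assms add_mod_eq_add_mod_iff[of t "n + 1" "s + u" p] by (simp add: ac_simps)
    then show "of_bool ((t + p) mod (n + 1) = (s + p + u) mod (n + 1)) = (of_bool (t = s + u) :: int)"
      by simp
  qed simp
  also have "\<dots> = of_bool (s \<le> t \<and> t \<le> s + l)"
  proof (cases "s \<le> t")
    case True
    then have "(\<Sum>u\<le>l. of_bool (t = s + u)) = (\<Sum>u\<le>l. of_bool (u = t - s) :: int)"
      by (intro sum.cong) auto
    then show ?thesis
      using True by (simp add: sum.delta le_diff_conv)
  qed auto
  finally show ?thesis .
qed

lemma cyclic_arc_at: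
  assumes "l \<le> n" "t \<le> n"
  shows "cyclic_arc n k l ((t + k) mod (n + 1)) = of_bool (t \<le> l)"
  using cyclic_arc_rotated[of 0 l n t k] assms by simp

lemma coeff_refl_cyclic_arc:
  assumes "2 \<le> n" "Suc l < n"
  shows "coeff_refl {0..n} (cartan_affA n) (k mod (n + 1)) (cyclic_arc n (k + 1) l) =
    cyclic_arc n k (Suc l)"
proof -
  let ?i = "k mod (n + 1)" and ?c = "cyclic_arc n (k + 1) l"
  have "(n + (k + 1)) mod (n + 1) = ?i"
    by (metis add.commute add.left_commute mod_add_self2)
  then have "?c ?i = ?c ((n + (k + 1)) mod (n + 1))"
    by simp
  also have "\<dots> = 0"
    using assms cyclic_arc_at[of l n n "k + 1"] by simp
  finally have at_i: "?c ?i = 0" .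
  have "?c ((?i + 1) mod (n + 1)) = ?c ((0 + (k + 1)) mod (n + 1))"
    by (simp add: mod_Suc_eq)
  also have "\<dots> = 1"
    using assms cyclic_arc_at[of l n 0 "k + 1"] by simp
  finally have at_succ: "?c ((?i + 1) mod (n + 1)) = 1" .
  have "(?i + n) mod (n + 1) = (k + n) mod (n + 1)"
    by (rule mod_add_left_eq)
  moreover have "n - 1 + (k + 1) = k + n"
    using assms by simp
  ultimately have "?c ((?i + n) mod (n + 1)) = ?c ((n - 1 + (k + 1)) mod (n + 1))"
    by (simp only:)
  also have "\<dots> = 0"
    using assms cyclic_arc_at[of l n "n - 1" "k + 1"] by simp
  finally have at_pred: "?c ((?i + n) mod (n + 1)) = 0" .
  have "(\<Sum>j\<in>{0..n}. cartan_affA n ?i j * ?c j) = -1"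
    using cartan_affA_row[OF assms(1), of ?i ?c] at_i at_succ at_pred by simp
  then show ?thesis
    by (simp add: coeff_refl_def cyclic_arc_Suc fun_eq_iff)
qed

definition arc_word :: "nat \<Rightarrow> nat \<Rightarrow> nat \<Rightarrow> nat list" where
  "arc_word n k l = map (\<lambda>t. (k + t) mod (n + 1)) [0..<l]"

lemma set_arc_word: "set (arc_word n k l) \<subseteq> {0..n}"
  by (auto simp: arc_word_def)

lemma coeff_act_cyclic_arc:
  assumes "2 \<le> n" "l < n"
  shows "coeff_act {0..n} (cartan_affA n) (arc_word n k l) (unit_vec ((k + l) mod (n + 1))) =
    cyclic_arc n k l"
  using assms(2)
proof (induction l arbitrary: k)
  case 0
  then show ?case
    by (simp add: arc_word_def coeff_act_def cyclic_arc_def unit_vec_def)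
next
  case (Suc l)
  have "arc_word n k (Suc l) = k mod (n + 1) # arc_word n (k + 1) l"
    by (simp add: arc_word_def map_upt_Suc del: upt_Suc)
  moreover have "k + Suc l = k + 1 + l"
    by simp
  ultimately show ?case
    using Suc.IH[of "k + 1"] Suc.prems coeff_refl_cyclic_arc[OF assms(1)]
    by (simp add: coeff_act_def del: upt_Suc)
qed

lemma cyclic_form_rotate:
  "cyclic_form n c c = (\<Sum>t<Suc n. (c ((t + p) mod (n + 1)) - c ((Suc t + p) mod (n + 1)))\<^sup>2)"
proof -
  have "cyclic_form n c c = (\<Sum>t\<in>{0..n}.
      (\<lambda>i. (c i - c ((i + 1) mod (n + 1)))\<^sup>2) ((t + p) mod (n + 1)))"
    using sum_rotate[of "\<lambda>i. (c i - c ((i + 1) mod (n + 1)))\<^sup>2" p n]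
    by (simp add: cyclic_form_def power2_eq_square)
  also have "\<dots> = (\<Sum>t<Suc n. (c ((t + p) mod (n + 1)) - c ((Suc t + p) mod (n + 1)))\<^sup>2)"
    by (rule sum.cong) (auto simp: mod_Suc_eq)
  finally show ?thesis .
qed

lemma cyclic_form_eq_2_imp_arc:
  fixes c :: "nat \<Rightarrow> int"
  assumes nonneg: "\<forall>j\<le>n. 0 \<le> c j" and form: "cyclic_form n c c = 2"
  shows "\<exists>k l M. k \<le> n \<and> l < n \<and> 0 \<le> M \<and> (\<forall>j\<le>n. c j = M + cyclic_arc n k l j)"
proof -
  define M where "M = Min (c ` {0..n})"
  have "M \<in> c ` {0..n}"
    unfolding M_def by (rule Min_in) auto
  then obtain p where p: "p \<le> n" "c p = M"
    by auto
  have M_le: "M \<le> c j" if "j \<le> n" for j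
    unfolding M_def using that by (intro Min_le) auto
  define f where "f t = c ((t + p) mod (n + 1)) - M" for t
  have "(\<Sum>t<Suc n. (f t - f (Suc t))\<^sup>2) = 2"
    using form by (simp add: f_def cyclic_form_rotate[of n c p])
  moreover have "(Suc n + p) mod (n + 1) = p"
    using p(1) by (metis Suc_eq_plus1 add.commute le_imp_less_Suc mod_add_self2 mod_less)
  then have "f 0 = 0" "f (Suc n) = 0"
    using p by (simp_all add: f_def)
  moreover have "\<forall>t\<le>Suc n. 0 \<le> f t"
    using M_le by (simp add: f_def)
  ultimately obtain s e where se: "1 \<le> s" "s \<le> e" "e < Suc n"
      "\<forall>t\<le>Suc n. f t = of_bool (s \<le> t \<and> t \<le> e)"
    using sum_sq_diff_eq_2_imp_bump[of f "Suc n"] by blast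
  have "c j = M + cyclic_arc n (s + p) (e - s) j" if "j \<le> n" for j
  proof -
    have "j \<in> (\<lambda>i. (i + p) mod (n + 1)) ` {0..n}"
      using that rotation_image[of p n] by simp
    then obtain t where t: "t \<le> n" "j = (t + p) mod (n + 1)"
      by auto
    have "c j = M + f t"
      by (simp add: f_def t(2))
    also have "f t = of_bool (s \<le> t \<and> t \<le> e)"
      using se(4) t(1) by simp
    also have "\<dots> = cyclic_arc n (s + p) (e - s) j"
      using cyclic_arc_rotated[of s "e - s" n t p] se t by simp
    finally show ?thesis .
  qed
  then have "\<forall>j\<le>n. c j = M + cyclic_arc n ((s + p) mod (n + 1)) (e - s) j"
    using cyclic_arc_mod[of n "s + p" "e - s"] by simp
  moreover have "(s + p) mod (n + 1) \<le> n" "e - s < n" "0 \<le> M"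
    using se p nonneg by auto
  ultimately show ?thesis
    by blast
qed

lemma cyclic_form_eq_1_if_reflection_nonpos:
  fixes c g :: "nat \<Rightarrow> int"
  assumes c_form: "cyclic_form n c c = 2" and c_nonneg: "\<forall>j\<le>n. 0 \<le> c j"
    and c_zero: "p \<le> n" "c p = 0"
    and g_form: "cyclic_form n g g = 2" and g_nonneg: "\<forall>j\<le>n. 0 \<le> g j"
    and reflected: "\<forall>j\<le>n. g j - cyclic_form n c g * c j \<le> 0"
    and g_ne_c: "\<exists>j\<le>n. g j \<noteq> c j"
  shows "cyclic_form n c g = 1"
proof -
  define b where "b = cyclic_form n c g"
  have "b \<ge> 1"
  proof (rule ccontr)
    assume "\<not> b \<ge> 1"
    then have "g j = 0" if "j \<le> n" for j
      using that c_nonneg g_nonneg reflected mult_nonpos_nonneg[of b "c j"] unfolding b_def by force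
    then have "cyclic_form n g g = cyclic_form n (\<lambda>_. 0) (\<lambda>_. 0)"
      by (intro cyclic_form_cong) simp_all
    then show False
      using g_form by (simp add: cyclic_form_def)
  qed
  moreover have diff_form: "cyclic_form n (\<lambda>j. g j - c j) (\<lambda>j. g j - c j) = 4 - 2 * b"
    using c_form g_form by (simp add: cyclic_form_diff_diff b_def)
  then have "b \<le> 2"
    using cyclic_form_nonneg[of n "\<lambda>j. g j - c j"] by simp
  moreover have "b \<noteq> 2"
  proof
    assume "b = 2"
    then have const: "g j - c j = g 0 - c 0" if "j \<le> n" for j
      using cyclic_form_eq_0_imp_const[of n "\<lambda>j. g j - c j" j] diff_form that by simp
    have "g p = 0"
      using reflected g_nonneg c_zero \<open>b = 2\<close> unfolding b_def by force
    then have "g j = c j" if "j \<le> n" for j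
      using const[OF that] const[OF c_zero(1)] c_zero by simp
    then show False
      using g_ne_c by blast
  qed
  ultimately show ?thesis
    unfolding b_def by simp
qed

section \<open>Quantum roots of type \<open>A\<^sub>n\<^sup>(\<^sup>1\<^sup>)\<close>\<close>

locale affine_A_root_datum = cartan_root_datum "{0..n}" m "cartan_affA n" \<alpha> \<alpha>v
  for n m :: nat and \<alpha> \<alpha>v :: "nat \<Rightarrow> nat \<Rightarrow> int" +
  assumes two_le_n: "2 \<le> n"
begin

lemma pair_coroot_lincomb_affA:
  "set w \<subseteq> {0..n} \<Longrightarrow> i \<le> n \<Longrightarrow>
    pair m (actY m \<alpha> \<alpha>v w (\<alpha>v i)) (lincomb {0..n} \<alpha> g) =
    cyclic_form n (coeff_act {0..n} (cartan_affA n) w (unit_vec i)) g"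
  using pair_coroot_lincomb[of w i g] by (simp add: transpose_cartan_affA cartan_form_affA two_le_n)

lemma actX_conj_reflection_affA:
  assumes "set w \<subseteq> {0..n}" "i \<le> n"
  defines "c \<equiv> coeff_act {0..n} (cartan_affA n) w (unit_vec i)"
  shows "actX m \<alpha> \<alpha>v (w @ [i] @ rev w) (lincomb {0..n} \<alpha> g) =
    lincomb {0..n} \<alpha> (\<lambda>j. g j - cyclic_form n c g * c j)"
  using actX_conj_reflection_lincomb[of w i g] assms
  by (simp add: transpose_cartan_affA cartan_form_affA two_le_n)

lemma cyclic_form_coeff_act:
  assumes "set w \<subseteq> {0..n}" "i \<le> n"
  defines "c \<equiv> coeff_act {0..n} (cartan_affA n) w (unit_vec i)"
  shows "cyclic_form n c c = 2"
  using cartan_form_coeff_act[of w i] assms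
  by (simp add: transpose_cartan_affA cartan_form_affA two_le_n)

lemma pos_root_coeffs:
  assumes "x \<in> pos_roots {0..n} m \<alpha> \<alpha>v"
  obtains c where "x = lincomb {0..n} \<alpha> c" "\<forall>j\<le>n. 0 \<le> c j" "cyclic_form n c c = 2"
proof -
  obtain w i where wi: "set w \<subseteq> {0..n}" "i \<le> n" "x = actX m \<alpha> \<alpha>v w (\<alpha> i)"
    using assms unfolding pos_roots_def real_roots_def by auto
  define c where "c = coeff_act {0..n} (cartan_affA n) w (unit_vec i)"
  have "x = lincomb {0..n} \<alpha> c"
    using wi actX_simple_root c_def by simp
  moreover have "\<forall>j\<le>n. 0 \<le> c j"
    using assms pos_root_coeff_nonneg calculation by simp
  moreover have "cyclic_form n c c = 2"
    using cyclic_form_coeff_act wi c_def by simp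
  ultimately show thesis
    using that by blast
qed

lemma actX_arc_word:
  "l < n \<Longrightarrow> actX m \<alpha> \<alpha>v (arc_word n k l) (\<alpha> ((k + l) mod (n + 1))) =
    lincomb {0..n} \<alpha> (cyclic_arc n k l)"
  using actX_simple_root[OF set_arc_word, of "(k + l) mod (n + 1)" k l]
    coeff_act_cyclic_arc[OF two_le_n, of l k]
  by simp

lemma cyclic_arc_pos_root: "l < n \<Longrightarrow> lincomb {0..n} \<alpha> (cyclic_arc n k l) \<in> pos_roots {0..n} m \<alpha> \<alpha>v"
  using simple_root_real_root[OF set_arc_word, of "(k + l) mod (n + 1)" k l] actX_arc_word[of l k]
  by (intro pos_rootI) (simp_all add: cyclic_arc_nonneg)

lemma cyclic_arc_inversion_pairing:
  assumes "l < n"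
    and \<gamma>: "\<gamma> \<in> Inv {0..n} m \<alpha> \<alpha>v (arc_word n k l @ [(k + l) mod (n + 1)] @ rev (arc_word n k l))
      - {lincomb {0..n} \<alpha> (cyclic_arc n k l)}"
  shows "pair m (actY m \<alpha> \<alpha>v (arc_word n k l) (\<alpha>v ((k + l) mod (n + 1)))) \<gamma> = 1"
proof -
  define w i c where "w = arc_word n k l" and "i = (k + l) mod (n + 1)" and "c = cyclic_arc n k l"
  have wi: "set w \<subseteq> {0..n}" "i \<le> n"
    by (simp_all add: w_def i_def set_arc_word)
  have coeff: "coeff_act {0..n} (cartan_affA n) w (unit_vec i) = c"
    using coeff_act_cyclic_arc[OF two_le_n assms(1)] by (simp add: w_def i_def c_def)
  obtain g where g: "\<gamma> = lincomb {0..n} \<alpha> g" "\<forall>j\<le>n. 0 \<le> g j" "cyclic_form n g g = 2"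
    using \<gamma> pos_root_coeffs unfolding Inv_def by blast
  have neg: "lincomb {0..n} \<alpha> (\<lambda>j. g j - cyclic_form n c g * c j) \<in> neg_roots {0..n} m \<alpha> \<alpha>v"
    using \<gamma> actX_conj_reflection_affA[OF wi, of g] g(1) coeff unfolding Inv_def w_def i_def by simp
  have "cyclic_form n c g = 1"
  proof (rule cyclic_form_eq_1_if_reflection_nonpos)
    show "cyclic_form n c c = 2"
      using cyclic_form_coeff_act[OF wi] coeff by simp
    show "c ((n + k) mod (n + 1)) = 0"
      using cyclic_arc_at[of l n n k] assms(1) by (simp add: c_def)
    show "\<forall>j\<le>n. g j - cyclic_form n c g * c j \<le> 0"
      using neg_root_coeff_nonpos[OF neg] by simp
    show "\<exists>j\<le>n. g j \<noteq> c j"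
      using \<gamma> g(1) lincomb_cong[of "{0..n}" g c \<alpha>] by (auto simp: c_def)
  qed (use g c_def cyclic_arc_nonneg in auto)
  then show ?thesis
    using pair_coroot_lincomb_affA[OF wi, of g] g(1) coeff by (simp add: w_def i_def)
qed

lemma cyclic_arc_quantum: "l < n \<Longrightarrow> quantum {0..n} m \<alpha> \<alpha>v (lincomb {0..n} \<alpha> (cyclic_arc n k l))"
  unfolding quantum_def
  using cyclic_arc_pos_root actX_arc_word cyclic_arc_inversion_pairing set_arc_word
  by (intro conjI exI[of _ "arc_word n k l"] exI[of _ "(k + l) mod (n + 1)"]) auto

lemma shifted_arc_inversion:
  assumes wi: "set w \<subseteq> {0..n}" "i \<le> n" and "l < n" "0 < M"
    and c: "\<forall>j\<le>n. coeff_act {0..n} (cartan_affA n) w (unit_vec i) j = M + cyclic_arc n k l j"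
  shows "lincomb {0..n} \<alpha> (cyclic_arc n k l) \<in>
      Inv {0..n} m \<alpha> \<alpha>v (w @ [i] @ rev w) - {actX m \<alpha> \<alpha>v w (\<alpha> i)}"
    and "pair m (actY m \<alpha> \<alpha>v w (\<alpha>v i)) (lincomb {0..n} \<alpha> (cyclic_arc n k l)) = 2"
proof -
  define c e where "c = coeff_act {0..n} (cartan_affA n) w (unit_vec i)" and "e = cyclic_arc n k l"
  have "cyclic_form n c e = cyclic_form n c (\<lambda>j. e j + M)"
    by (simp add: cyclic_form_add_const)
  also have "\<dots> = cyclic_form n c c"
    using c by (intro cyclic_form_cong) (simp_all add: c_def e_def)
  finally have ce: "cyclic_form n c e = 2"
    using cyclic_form_coeff_act[OF wi] by (simp add: c_def)
  then show "pair m (actY m \<alpha> \<alpha>v w (\<alpha>v i)) (lincomb {0..n} \<alpha> (cyclic_arc n k l)) = 2"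
    using pair_coroot_lincomb_affA[OF wi, of e] by (simp add: c_def e_def)
  have e_pos: "lincomb {0..n} \<alpha> e \<in> pos_roots {0..n} m \<alpha> \<alpha>v"
    using cyclic_arc_pos_root[OF \<open>l < n\<close>] by (simp add: e_def)
  have reflect: "actX m \<alpha> \<alpha>v (w @ [i] @ rev w) (lincomb {0..n} \<alpha> e) =
      lincomb {0..n} \<alpha> (\<lambda>j. e j - 2 * c j)"
    using actX_conj_reflection_affA[OF wi, of e] ce by (simp add: c_def)
  have "lincomb {0..n} \<alpha> (\<lambda>j. e j - 2 * c j) \<in> neg_roots {0..n} m \<alpha> \<alpha>v"
  proof (rule neg_rootI)
    show "lincomb {0..n} \<alpha> (\<lambda>j. e j - 2 * c j) \<in> real_roots {0..n} m \<alpha> \<alpha>v"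
      using actX_real_root[of "lincomb {0..n} \<alpha> e" "w @ [i] @ rev w"] e_pos wi reflect
      unfolding pos_roots_def by auto
    show "e j - 2 * c j \<le> 0" if "j \<in> {0..n}" for j
      using c that \<open>0 < M\<close> cyclic_arc_nonneg[of n k l j] by (simp add: c_def e_def)
  qed
  moreover have "lincomb {0..n} \<alpha> e \<noteq> lincomb {0..n} \<alpha> c"
    using lincomb_root_inj[of e c 0] c \<open>0 < M\<close> by (auto simp: c_def e_def)
  ultimately show "lincomb {0..n} \<alpha> (cyclic_arc n k l) \<in>
      Inv {0..n} m \<alpha> \<alpha>v (w @ [i] @ rev w) - {actX m \<alpha> \<alpha>v w (\<alpha> i)}"
    using e_pos reflect actX_simple_root[OF wi(1)] wi(2) unfolding Inv_def
    by (simp add: c_def e_def)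
qed

lemma quantum_imp_cyclic_arc:
  assumes "quantum {0..n} m \<alpha> \<alpha>v \<beta>"
  shows "\<exists>k l. k \<le> n \<and> l < n \<and> \<beta> = lincomb {0..n} \<alpha> (cyclic_arc n k l)"
proof -
  obtain w i where wi: "set w \<subseteq> {0..n}" "i \<le> n" and \<beta>: "\<beta> = actX m \<alpha> \<alpha>v w (\<alpha> i)"
    and \<beta>_pos: "\<beta> \<in> pos_roots {0..n} m \<alpha> \<alpha>v"
    and pairing: "\<forall>\<gamma> \<in> Inv {0..n} m \<alpha> \<alpha>v (w @ [i] @ rev w) - {\<beta>}.
      pair m (actY m \<alpha> \<alpha>v w (\<alpha>v i)) \<gamma> = 1"
    using assms unfolding quantum_def by auto
  define c where "c = coeff_act {0..n} (cartan_affA n) w (unit_vec i)"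
  have \<beta>_c: "\<beta> = lincomb {0..n} \<alpha> c"
    using \<beta> wi actX_simple_root by (simp add: c_def)
  have "\<forall>j\<le>n. 0 \<le> c j"
    using \<beta>_pos pos_root_coeff_nonneg by (simp add: \<beta>_c)
  then obtain k l M where klM: "k \<le> n" "l < n" "0 \<le> M"
    and c: "\<forall>j\<le>n. c j = M + cyclic_arc n k l j"
    using cyclic_form_eq_2_imp_arc cyclic_form_coeff_act[OF wi] c_def by blast
  have "M = 0"
  proof (rule ccontr)
    assume "M \<noteq> 0"
    then show False
      using shifted_arc_inversion[OF wi klM(2), of M k] klM(3) c pairing \<beta>
      by (simp add: c_def)
  qed
  then have "\<beta> = lincomb {0..n} \<alpha> (cyclic_arc n k l)"
    unfolding \<beta>_c using c by (intro lincomb_cong) simp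
  then show ?thesis
    using klM by blast
qed

lemma quantum_roots_eq_cyclic_arcs:
  "{\<beta>. quantum {0..n} m \<alpha> \<alpha>v \<beta>} = {lincomb {0..n} \<alpha> (cyclic_arc n k l) | k l. k \<le> n \<and> l < n}"
  using cyclic_arc_quantum quantum_imp_cyclic_arc by blast

end

theorem proposition2p32:
  fixes n m :: nat and \<alpha> \<alpha>v :: "nat \<Rightarrow> nat \<Rightarrow> int"
  assumes "n \<ge> 2"
    and "root_datum {0..n} m (cartan_affA n) \<alpha> \<alpha>v"
  shows "{\<beta>. quantum {0..n} m \<alpha> \<alpha>v \<beta>} =
    {(\<lambda>j. \<Sum>t\<le>l. \<alpha> ((k + t) mod (n + 1)) j) | k l. k \<le> n \<and> l \<le> n - 1}"
proof -
  interpret affine_A_root_datum n m \<alpha> \<alpha>v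
    using assms by unfold_locales (simp_all add: cartan_affA_def)
  have arc_sum: "(\<lambda>j. \<Sum>t\<le>l. \<alpha> ((k + t) mod (n + 1)) j) = lincomb {0..n} \<alpha> (cyclic_arc n k l)"
    for k l
    unfolding cyclic_arc_def by (rule lincomb_sum_of_bool[symmetric]) auto
  have "l \<le> n - 1 \<longleftrightarrow> l < n" for l
    using assms(1) by auto
  then show ?thesis
    unfolding quantum_roots_eq_cyclic_arcs arc_sum by simp
qed

end
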